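(* Let $a,b\in\mathbb{Q}$ be such that $f(x)=x^{12}+ax^6+b$ is irreducible over $\mathbb{Q}$, and let $\theta$ be a root of $f(x)$. Then for every $r\in\mathbb{Q}\setminus\mathbb{Q}^2$, we have $r\in\mathbb{Q}(\theta)^2$ if and only if at least one of $r(a^2-4b)$, $r(-a+2\sqrt{b})$, $r(-a-2\sqrt{b})$ lies in $\mathbb{Q}^2$.
   Context: For a field $K$, $K^2$ denotes the set of squares in $K$; $\mathbb{Q}^2$ is the set of rational squares. $\sqrt{b}$ denotes a fixed complex square root of $b$. *)

theory Defs
  imports Complex_Main "HOL-Computational_Algebra.Polynomial"
begin

definition subfield_C :: "complex set \<Rightarrow> bool" where
  "subfield_C S \<longleftrightarrow> 0 \<in> S \<and> 1 \<in> S \<and>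
     (\<forall>x\<in>S. \<forall>y\<in>S. x + y \<in> S \<and> x - y \<in> S \<and> x * y \<in> S) \<and>
     (\<forall>x\<in>S. x \<noteq> 0 \<longrightarrow> inverse x \<in> S)"

text \<open>The field Q(theta): the smallest subfield of C containing theta
  (every subfield of C contains Q).\<close>
definition Q_adj :: "complex \<Rightarrow> complex set" where
  "Q_adj \<theta> = \<Inter>{S. subfield_C S \<and> \<theta> \<in> S}"

definition squares_in :: "complex set \<Rightarrow> complex set" where
  "squares_in K = {y ^ 2 | y. y \<in> K}"

definition rat_squares :: "complex set" where
  "rat_squares = {of_rat (q ^ 2) | q. True}"

end

theory Submission
  imports Defs "HOL-Computational_Algebra.Polynomial_Factorial"
    "HOL-Computational_Algebra.Field_as_Ring"
begin

(* Since f is irreducible, 1, \<theta>, ..., \<theta>^11 are linearly independent over Q. This makes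
  Q(\<theta>^6) \<subseteq> Q(\<theta>^2) \<subseteq> Q(\<theta>) a tower of degrees 2, 3, 2 with explicit bases, \<theta>^6 being a root
  of y^2 + a y + b. If t \<in> Q(\<theta>) and t^2 = r, comparing coordinates in the basis 1, \<theta> over
  Q(\<theta>^2) gives t \<in> Q(\<theta>^2) or t \<in> \<theta> Q(\<theta>^2); since a cubic extension creates no new
  square roots, t \<in> Q(\<theta>^6) or t \<in> \<theta>^3 Q(\<theta>^6). In the first case r is a square in
  Q(\<theta>^6) = Q(sqrt(a^2 - 4b)), i.e. r(a^2 - 4b) \<in> Q^2; in the second one r/\<theta>^6 is a square
  in Q(\<theta>^6), which forces b = s^2 with s rational and r(-a + 2s) \<in> Q^2. Conversely
  (2\<theta>^6 + a)^2 = a^2 - 4b and (\<theta>^3 + s/\<theta>^3)^2 = -a + 2s exhibit the square roots. *)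

lemma of_rat_in_rat_squares_iff: "of_rat x \<in> rat_squares \<longleftrightarrow> (\<exists>q. x = q^2)"
  unfolding rat_squares_def by (auto simp flip: of_rat_power)

lemma complex_of_rat_eq_of_real: "(of_rat q :: complex) = of_real (of_rat q)"
proof -
  obtain n d where "quotient_of q = (n, d)" by (cases "quotient_of q")
  then have "q = of_int n / of_int d" by (rule quotient_of_div)
  then show ?thesis by (simp add: of_rat_divide)
qed

lemma csqrt_of_rat_square: "csqrt (of_rat (s^2)) = of_rat \<bar>s\<bar>"
proof (rule csqrt_unique)
  show "(of_rat \<bar>s\<bar>)^2 = (of_rat (s^2) :: complex)"
    by (metis of_rat_power power2_abs)
  show "0 < Re (of_rat \<bar>s\<bar>) \<or> Re (of_rat \<bar>s\<bar>) = 0 \<and> 0 \<le> Im (of_rat \<bar>s\<bar> :: complex)"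
    by (subst (1 2 3) complex_of_rat_eq_of_real) (auto simp: less_le)
qed

lemma rational_sqrt_if_affine_rat_square:
  fixes c :: complex
  assumes "r \<noteq> 0" "c^2 = of_rat b" "of_rat r * (- of_rat a + 2 * c) = of_rat (q^2)"
  obtains s where "c = of_rat s" "s^2 = b" "r * (- a + 2 * s) = q^2"
proof
  define s where "s = (q^2 / r + a) / 2"
  have "- of_rat a + 2 * c = of_rat (q^2) / (of_rat r :: complex)"
    using assms(1,3) by (simp add: eq_divide_eq mult.commute)
  then show c: "c = of_rat s"
    unfolding s_def by (simp add: of_rat_divide of_rat_add field_simps)
  then have "of_rat (s^2) = (of_rat b :: complex)"
    using assms(2) by (simp add: of_rat_power)
  then show "s^2 = b" by simp
  have "of_rat (r * (- a + 2 * s)) = (of_rat (q^2) :: complex)"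
    using assms(3) c by (simp add: of_rat_mult of_rat_diff algebra_simps)
  then show "r * (- a + 2 * s) = q^2" by simp
qed

lemma rat_squares_csqrt_iff:
  fixes a b r :: rat
  assumes "r \<noteq> 0"
  shows "(of_rat r * (- of_rat a + 2 * csqrt (of_rat b)) \<in> rat_squares \<or>
          of_rat r * (- of_rat a - 2 * csqrt (of_rat b)) \<in> rat_squares) \<longleftrightarrow>
         (\<exists>s q. s^2 = b \<and> r * (- a + 2 * s) = q^2)"
proof
  assume "of_rat r * (- of_rat a + 2 * csqrt (of_rat b)) \<in> rat_squares \<or>
          of_rat r * (- of_rat a - 2 * csqrt (of_rat b)) \<in> rat_squares"
  then obtain c q where "c^2 = of_rat b" "of_rat r * (- of_rat a + 2 * c) = (of_rat (q^2) :: complex)"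
  proof (elim disjE)
    assume "of_rat r * (- of_rat a + 2 * csqrt (of_rat b)) \<in> rat_squares"
    then show ?thesis using that[of "csqrt (of_rat b)"] unfolding rat_squares_def by auto
  next
    assume "of_rat r * (- of_rat a - 2 * csqrt (of_rat b)) \<in> rat_squares"
    then show ?thesis using that[of "- csqrt (of_rat b)"] unfolding rat_squares_def by auto
  qed
  from rational_sqrt_if_affine_rat_square[OF assms this]
  show "\<exists>s q. s^2 = b \<and> r * (- a + 2 * s) = q^2" by blast
next
  assume "\<exists>s q. s^2 = b \<and> r * (- a + 2 * s) = q^2"
  then obtain s q where s: "s^2 = b" and q: "r * (- a + 2 * s) = q^2" by blast
  have "of_rat r * (- of_rat a + 2 * of_rat s) = (of_rat (q^2) :: complex)"
    unfolding q[symmetric] by (simp add: of_rat_mult of_rat_diff)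
  moreover have "csqrt (of_rat b) = of_rat \<bar>s\<bar>"
    using csqrt_of_rat_square[of s] s by simp
  ultimately show "of_rat r * (- of_rat a + 2 * csqrt (of_rat b)) \<in> rat_squares \<or>
                   of_rat r * (- of_rat a - 2 * csqrt (of_rat b)) \<in> rat_squares"
    unfolding rat_squares_def by (cases "s \<ge> 0") (auto simp: of_rat_minus)
qed

lemma of_rat_in_subfield_C:
  assumes "subfield_C S"
  shows "of_rat q \<in> S"
proof -
  have S: "0 \<in> S" "1 \<in> S" "\<And>x y. x \<in> S \<Longrightarrow> y \<in> S \<Longrightarrow> x + y \<in> S \<and> x - y \<in> S \<and> x * y \<in> S"
     "\<And>x. x \<in> S \<Longrightarrow> x \<noteq> 0 \<Longrightarrow> inverse x \<in> S"
    using assms unfolding subfield_C_def by auto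
  have nat: "of_nat n \<in> S" for n by (induction n) (use S in auto)
  have int: "of_int k \<in> S" for k
  proof (cases "k \<ge> 0")
    case True then show ?thesis using nat[of "nat k"] by simp
  next
    case False then have "of_int k = (0::complex) - of_nat (nat (- k))" by simp
    then show ?thesis using S(1,3) nat by metis
  qed
  obtain n d where "quotient_of q = (n, d)" by (cases "quotient_of q")
  then have "q = of_int n / of_int d" by (rule quotient_of_div)
  then have "of_rat q = (of_int n :: complex) * inverse (of_int d)"
    by (simp add: of_rat_divide flip: divide_inverse)
  then show ?thesis using S(3,4) int by (metis mult_zero_right inverse_zero)
qed

lemma subfield_C_add: "subfield_C S \<Longrightarrow> x \<in> S \<Longrightarrow> y \<in> S \<Longrightarrow> x + y \<in> S"
  and subfield_C_mult: "subfield_C S \<Longrightarrow> x \<in> S \<Longrightarrow> y \<in> S \<Longrightarrow> x * y \<in> S"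
  unfolding subfield_C_def by auto

lemma subfield_C_divide: "subfield_C S \<Longrightarrow> x \<in> S \<Longrightarrow> y \<in> S \<Longrightarrow> x / y \<in> S"
  unfolding subfield_C_def divide_inverse by (cases "y = 0") auto

lemma subfield_C_power: "subfield_C S \<Longrightarrow> x \<in> S \<Longrightarrow> x ^ n \<in> S"
  by (induction n) (auto simp: subfield_C_def)

lemma of_rat_in_squares_in_if_mult_square:
  assumes "subfield_C S" "w \<in> S" "w^2 = of_rat d" "d \<noteq> 0" "r * d = q^2"
  shows "of_rat r \<in> squares_in S"
proof -
  have "r = q^2 / d" using assms(4,5) by (simp add: field_simps)
  then have "(of_rat q / w)^2 = of_rat r"
    using assms(3) by (simp add: power_divide of_rat_divide of_rat_power)
  moreover have "of_rat q / w \<in> S"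
    using assms(1,2) by (simp add: subfield_C_divide of_rat_in_subfield_C)
  ultimately show ?thesis unfolding squares_in_def by force
qed

lemma subfield_C_Q_adj: "subfield_C (Q_adj x)"
  unfolding subfield_C_def Q_adj_def by auto

lemma self_in_Q_adj: "x \<in> Q_adj x"
  unfolding Q_adj_def by auto

lemma Q_adj_subset: "subfield_C S \<Longrightarrow> x \<in> S \<Longrightarrow> Q_adj x \<subseteq> S"
  unfolding Q_adj_def by auto

lemma irreducible_not_dvd_imp_bezout:
  fixes p q :: "'a::euclidean_ring_gcd"
  assumes "irreducible p" "\<not> p dvd q"
  obtains u v where "u * p + v * q = 1"
proof -
  have "coprime p q"
    using assms by (simp add: irreducible_imp_prime_elem_gcd prime_elem_imp_coprime)
  then show ?thesis
    using that bezout_coefficients_fst_snd[of p q] by (auto simp: coprime_iff_gcd_eq_1)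
qed

lemma map_poly_of_rat_add:
  "map_poly (of_rat :: rat \<Rightarrow> 'a::field_char_0) (p + q) = map_poly of_rat p + map_poly of_rat q"
  by (rule poly_eqI) (simp add: coeff_map_poly of_rat_add)

lemma map_poly_of_rat_diff:
  "map_poly (of_rat :: rat \<Rightarrow> 'a::field_char_0) (p - q) = map_poly of_rat p - map_poly of_rat q"
  by (rule poly_eqI) (simp add: coeff_map_poly of_rat_diff)

lemma map_poly_of_rat_mult:
  "map_poly (of_rat :: rat \<Rightarrow> 'a::field_char_0) (p * q) = map_poly of_rat p * map_poly of_rat q"
  by (rule poly_eqI) (simp add: coeff_map_poly coeff_mult of_rat_add of_rat_mult of_rat_sum)

locale root_of_trinomial =
  fixes a b :: rat and \<theta> :: complex
  assumes irr: "irreducible (monom 1 12 + monom a 6 + [:b:] :: rat poly)"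
    and root: "poly (map_poly of_rat (monom 1 12 + monom a 6 + [:b:])) \<theta> = 0"
begin

definition trinomial :: "rat poly" where
  "trinomial = monom 1 12 + monom a 6 + [:b:]"

definition peval :: "rat poly \<Rightarrow> complex" where
  "peval p = poly (map_poly of_rat p) \<theta>"

lemma peval_0 [simp]: "peval 0 = 0"
  and peval_1 [simp]: "peval 1 = 1"
  and peval_const [simp]: "peval [:c:] = of_rat c"
  and peval_X [simp]: "peval [:0, 1:] = \<theta>"
  and peval_monom [simp]: "peval (monom c n) = of_rat c * \<theta> ^ n"
  and peval_add [simp]: "peval (p + q) = peval p + peval q"
  and peval_diff [simp]: "peval (p - q) = peval p - peval q"
  and peval_mult [simp]: "peval (p * q) = peval p * peval q"
  unfolding peval_def
  by (simp_all add: map_poly_pCons map_poly_monom poly_monom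
      map_poly_of_rat_add map_poly_of_rat_diff map_poly_of_rat_mult)

lemma peval_sum: "peval (sum f A) = (\<Sum>x\<in>A. peval (f x))"
  by (induction A rule: infinite_finite_induct) auto

lemma peval_trinomial: "peval trinomial = 0"
  using root unfolding peval_def trinomial_def .

lemma theta6_squared: "\<theta>^6 * \<theta>^6 = - of_rat a * \<theta>^6 - of_rat b"
proof -
  have "\<theta>^12 + of_rat a * \<theta>^6 + of_rat b = 0"
    using peval_trinomial unfolding trinomial_def by simp
  moreover have "\<theta>^6 * \<theta>^6 = \<theta>^12" by (simp flip: power_add)
  ultimately show ?thesis by (simp add: algebra_simps eq_neg_iff_add_eq_0)
qed

lemma irreducible_trinomial: "irreducible trinomial"
  using irr unfolding trinomial_def .

lemma degree_trinomial: "degree trinomial = 12"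
proof -
  have "degree (monom a 6 :: rat poly) < degree (monom (1::rat) 12)"
    using degree_monom_le[of a 6] by (simp add: degree_monom_eq)
  then have "degree (monom 1 12 + monom a 6 :: rat poly) = 12"
    by (simp add: degree_add_eq_left degree_monom_eq)
  then show ?thesis unfolding trinomial_def by (subst degree_add_eq_left) auto
qed

lemma peval_bezout:
  assumes "\<not> trinomial dvd q"
  obtains v where "peval v * peval q = 1"
proof -
  obtain u v where "u * trinomial + v * q = 1"
    using irreducible_not_dvd_imp_bezout[OF irreducible_trinomial assms] .
  then have "peval (u * trinomial + v * q) = 1" by simp
  then show ?thesis using that peval_trinomial by simp
qed

lemma trinomial_dvd_if_peval_eq_0: "peval q = 0 \<Longrightarrow> trinomial dvd q"
  using peval_bezout by (metis mult_zero_right zero_neq_one)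

lemma inverse_peval: "\<exists>v. inverse (peval q) = peval v"
proof (cases "peval q = 0")
  case True
  then show ?thesis by (metis inverse_zero peval_0)
next
  case False
  then have "\<not> trinomial dvd q" using peval_trinomial by (auto elim: dvdE)
  then obtain v where "peval v * peval q = 1" by (rule peval_bezout)
  then show ?thesis by (metis inverse_unique mult.commute)
qed

lemma power_basis_independent:
  assumes "(\<Sum>j<12. of_rat (c j) * \<theta>^j) = 0" "j < 12"
  shows "c j = 0"
proof -
  define g where "g = (\<Sum>j<12. monom (c j) j)"
  have coeff_g: "coeff g n = (if n < 12 then c n else 0)" for n
    unfolding g_def by (simp add: coeff_sum coeff_monom)
  have "peval g = 0" using assms(1) unfolding g_def peval_sum by simp
  then have "trinomial dvd g" by (rule trinomial_dvd_if_peval_eq_0)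
  moreover have "degree g < degree trinomial"
    using degree_trinomial by (simp add: degree_lessI coeff_g)
  ultimately have "g = 0" by (metis dvd_imp_degree_le not_le)
  then show ?thesis using coeff_g[of j] assms(2) by simp
qed

lemma subfield_C_range_peval: "subfield_C (range peval)"
  unfolding subfield_C_def
proof (intro conjI ballI impI)
  show "0 \<in> range peval" "1 \<in> range peval"
    by (metis peval_0 rangeI, metis peval_1 rangeI)
  fix x y assume "x \<in> range peval" "y \<in> range peval"
  then obtain p q where "x = peval p" "y = peval q" by blast
  then show "x + y \<in> range peval" "x - y \<in> range peval" "x * y \<in> range peval"
    by (metis peval_add rangeI, metis peval_diff rangeI, metis peval_mult rangeI)
  show "inverse x \<in> range peval" using inverse_peval \<open>x = peval p\<close> by auto
qed

lemma Q_adj_power_basis: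
  assumes "t \<in> Q_adj \<theta>"
  obtains c where "t = (\<Sum>j<12. of_rat (c j) * \<theta>^j)"
proof -
  have "Q_adj \<theta> \<subseteq> range peval"
    using Q_adj_subset subfield_C_range_peval peval_X by (metis rangeI)
  then obtain p where p: "t = peval p" using assms by blast
  define q where "q = p mod trinomial"
  have "peval p = peval q"
    using div_mult_mod_eq[of p trinomial] peval_trinomial unfolding q_def
    by (metis add_0 mult_zero_right peval_add peval_mult)
  have "trinomial \<noteq> 0" using degree_trinomial by auto
  then have "degree q < 12"
    using degree_mod_less[of trinomial p] degree_trinomial unfolding q_def
    by (cases "p mod trinomial = 0") auto
  then have "q = (\<Sum>j<12. monom (coeff q j) j)"
    by (intro poly_eqI) (auto simp: coeff_sum coeff_monom coeff_eq_0)
  then have "peval q = (\<Sum>j<12. of_rat (coeff q j) * \<theta>^j)"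
    by (metis (no_types, lifting) peval_sum peval_monom sum.cong)
  then show ?thesis using that p \<open>peval p = peval q\<close> by simp
qed

definition Q_theta6 :: "complex set" where
  "Q_theta6 = {of_rat p + of_rat q * \<theta>^6 | p q. True}"

lemma Q_theta6_I [intro]: "of_rat p + of_rat q * \<theta>^6 \<in> Q_theta6"
  unfolding Q_theta6_def by blast

lemma Q_theta6_E :
  assumes "x \<in> Q_theta6"
  obtains p q where "x = of_rat p + of_rat q * \<theta>^6"
  using assms unfolding Q_theta6_def by blast

lemma of_rat_in_Q_theta6 [simp]: "of_rat p \<in> Q_theta6"
  using Q_theta6_I[of p 0] by simp

lemma numeral_in_Q_theta6 [simp]: "numeral n \<in> Q_theta6"
  using of_rat_in_Q_theta6[of "numeral n"] by simp

lemma zero_in_Q_theta6 [simp]: "0 \<in> Q_theta6"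
  and one_in_Q_theta6 [simp]: "1 \<in> Q_theta6"
  using of_rat_in_Q_theta6[of 0] of_rat_in_Q_theta6[of 1] by simp_all

lemma theta6_in_Q_theta6 [simp]: "\<theta>^6 \<in> Q_theta6"
  using Q_theta6_I[of 0 1] by simp

lemma Q_theta6_add [simp]: "x \<in> Q_theta6 \<Longrightarrow> y \<in> Q_theta6 \<Longrightarrow> x + y \<in> Q_theta6"
proof (elim Q_theta6_E)
  fix p q p' q' assume "x = of_rat p + of_rat q * \<theta>^6" "y = of_rat p' + of_rat q' * \<theta>^6"
  then have "x + y = of_rat (p + p') + of_rat (q + q') * \<theta>^6"
    by (simp add: of_rat_add algebra_simps)
  then show ?thesis by auto
qed

lemma Q_theta6_uminus [simp]: "x \<in> Q_theta6 \<Longrightarrow> - x \<in> Q_theta6"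
proof (elim Q_theta6_E)
  fix p q assume "x = of_rat p + of_rat q * \<theta>^6"
  then have "- x = of_rat (- p) + of_rat (- q) * \<theta>^6" by (simp add: of_rat_minus)
  then show ?thesis by auto
qed

lemma Q_theta6_diff [simp]: "x \<in> Q_theta6 \<Longrightarrow> y \<in> Q_theta6 \<Longrightarrow> x - y \<in> Q_theta6"
  using Q_theta6_add[of x "- y"] by simp

lemma Q_theta6_mult [simp]: "x \<in> Q_theta6 \<Longrightarrow> y \<in> Q_theta6 \<Longrightarrow> x * y \<in> Q_theta6"
proof (elim Q_theta6_E)
  fix p q p' q' assume x: "x = of_rat p + of_rat q * \<theta>^6" and y: "y = of_rat p' + of_rat q' * \<theta>^6"
  have "x * y = of_rat p * of_rat p' + (of_rat p * of_rat q' + of_rat q * of_rat p') * \<theta>^6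
      + of_rat q * of_rat q' * (\<theta>^6 * \<theta>^6)"
    unfolding x y by algebra
  also have "\<dots> = of_rat (p * p' - b * q * q') + of_rat (p * q' + q * p' - a * q * q') * \<theta>^6"
    unfolding theta6_squared by (simp add: of_rat_add of_rat_mult of_rat_diff algebra_simps)
  finally show ?thesis by auto
qed

lemma Q_theta6_power [simp]: "x \<in> Q_theta6 \<Longrightarrow> x ^ n \<in> Q_theta6"
  by (induction n) simp_all

lemma sum_power_basis_12:
  "(\<Sum>j<12. of_rat (([p0, p1, p2, p3, p4, p5, q0, q1, q2, q3, q4, q5] :: rat list) ! j) * \<theta>^j) =
   (of_rat p0 + of_rat q0 * \<theta>^6) + (of_rat p1 + of_rat q1 * \<theta>^6) * \<theta> +
   (of_rat p2 + of_rat q2 * \<theta>^6) * \<theta>^2 + (of_rat p3 + of_rat q3 * \<theta>^6) * \<theta>^3 +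
   (of_rat p4 + of_rat q4 * \<theta>^6) * \<theta>^4 + (of_rat p5 + of_rat q5 * \<theta>^6) * \<theta>^5"
  by (simp add: eval_nat_numeral algebra_simps)

lemma Q_theta6_coords_eq_0:
  assumes "of_rat p + of_rat q * \<theta>^6 = 0"
  shows "p = 0" "q = 0"
proof -
  define c where "c = (!) ([p, 0, 0, 0, 0, 0, q, 0, 0, 0, 0, 0] :: rat list)"
  have "(\<Sum>j<12. of_rat (c j) * \<theta>^j) = 0"
    unfolding c_def sum_power_basis_12 using assms by simp
  from power_basis_independent[OF this, of 0] power_basis_independent[OF this, of 6]
  show "p = 0" "q = 0" unfolding c_def by simp_all
qed

lemma theta_nonzero: "\<theta> \<noteq> 0"
  using Q_theta6_coords_eq_0(2)[of 0 1] by auto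

lemma Q_theta6_power_basis_independent:
  assumes "X0 \<in> Q_theta6" "X1 \<in> Q_theta6" "X2 \<in> Q_theta6" "X3 \<in> Q_theta6" "X4 \<in> Q_theta6" "X5 \<in> Q_theta6"
    and "X0 + X1 * \<theta> + X2 * \<theta>^2 + X3 * \<theta>^3 + X4 * \<theta>^4 + X5 * \<theta>^5 = 0"
  shows "X0 = 0 \<and> X1 = 0 \<and> X2 = 0 \<and> X3 = 0 \<and> X4 = 0 \<and> X5 = 0"
proof -
  obtain p0 q0 p1 q1 p2 q2 p3 q3 p4 q4 p5 q5 where X:
    "X0 = of_rat p0 + of_rat q0 * \<theta>^6" "X1 = of_rat p1 + of_rat q1 * \<theta>^6"
    "X2 = of_rat p2 + of_rat q2 * \<theta>^6" "X3 = of_rat p3 + of_rat q3 * \<theta>^6"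
    "X4 = of_rat p4 + of_rat q4 * \<theta>^6" "X5 = of_rat p5 + of_rat q5 * \<theta>^6"
    using assms(1-6) by (elim Q_theta6_E) blast
  define c where "c = (!) ([p0, p1, p2, p3, p4, p5, q0, q1, q2, q3, q4, q5] :: rat list)"
  have "(\<Sum>j<12. of_rat (c j) * \<theta>^j) = 0"
    unfolding c_def sum_power_basis_12 using assms(7) unfolding X .
  then have "c j = 0" if "j < 12" for j using power_basis_independent that by blast
  from this[of 0] this[of 1] this[of 2] this[of 3] this[of 4] this[of 5]
       this[of 6] this[of 7] this[of 8] this[of 9] this[of 10] this[of 11]
  show ?thesis unfolding c_def X by simp
qed

definition Q_theta2 :: "complex set" where
  "Q_theta2 = {A + B * \<theta>^2 + C * \<theta>^4 | A B C. A \<in> Q_theta6 \<and> B \<in> Q_theta6 \<and> C \<in> Q_theta6}"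

lemma Q_theta2_I [intro]:
  "A \<in> Q_theta6 \<Longrightarrow> B \<in> Q_theta6 \<Longrightarrow> C \<in> Q_theta6 \<Longrightarrow> A + B * \<theta>^2 + C * \<theta>^4 \<in> Q_theta2"
  unfolding Q_theta2_def by blast

lemma Q_theta2_E:
  assumes "x \<in> Q_theta2"
  obtains A B C where "A \<in> Q_theta6" "B \<in> Q_theta6" "C \<in> Q_theta6" "x = A + B * \<theta>^2 + C * \<theta>^4"
  using assms unfolding Q_theta2_def by blast

lemma Q_theta6_subset_Q_theta2: "x \<in> Q_theta6 \<Longrightarrow> x \<in> Q_theta2"
  using Q_theta2_I[of x 0 0] by simp

lemma Q_theta2_add: "x \<in> Q_theta2 \<Longrightarrow> y \<in> Q_theta2 \<Longrightarrow> x + y \<in> Q_theta2"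
  and Q_theta2_diff: "x \<in> Q_theta2 \<Longrightarrow> y \<in> Q_theta2 \<Longrightarrow> x - y \<in> Q_theta2"
  and Q_theta2_mult: "x \<in> Q_theta2 \<Longrightarrow> y \<in> Q_theta2 \<Longrightarrow> x * y \<in> Q_theta2"
proof -
  assume "x \<in> Q_theta2" "y \<in> Q_theta2"
  then obtain A B C A' B' C' where F: "A \<in> Q_theta6" "B \<in> Q_theta6" "C \<in> Q_theta6"
      "A' \<in> Q_theta6" "B' \<in> Q_theta6" "C' \<in> Q_theta6"
    and x: "x = A + B * \<theta>^2 + C * \<theta>^4" and y: "y = A' + B' * \<theta>^2 + C' * \<theta>^4"
    by (metis Q_theta2_E)
  have "x + y = (A + A') + (B + B') * \<theta>^2 + (C + C') * \<theta>^4"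
    and "x - y = (A - A') + (B - B') * \<theta>^2 + (C - C') * \<theta>^4"
    and "x * y = (A * A' + (B * C' + C * B') * \<theta>^6) + (A * B' + B * A' + C * C' * \<theta>^6) * \<theta>^2
      + (A * C' + B * B' + C * A') * \<theta>^4"
    unfolding x y by algebra+
  then show "x + y \<in> Q_theta2" "x - y \<in> Q_theta2" "x * y \<in> Q_theta2"
    using F by (simp_all add: Q_theta2_I)
qed

lemma theta2_in_Q_theta2: "\<theta>^2 \<in> Q_theta2"
  using Q_theta2_I[of 0 1 0] by simp

lemma Q_theta2_coords_eq_0:
  assumes "A \<in> Q_theta6" "B \<in> Q_theta6" "C \<in> Q_theta6" "A + B * \<theta>^2 + C * \<theta>^4 = 0"
  shows "A = 0" "B = 0" "C = 0"
  using Q_theta6_power_basis_independent[of A 0 B 0 C 0] assms by auto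

lemma Q_theta2_theta_independent:
  assumes "u \<in> Q_theta2" "v \<in> Q_theta2" "u + \<theta> * v = 0"
  shows "u = 0" "v = 0"
proof -
  obtain A B C A' B' C' where F: "A \<in> Q_theta6" "B \<in> Q_theta6" "C \<in> Q_theta6"
    "A' \<in> Q_theta6" "B' \<in> Q_theta6" "C' \<in> Q_theta6"
    and u: "u = A + B * \<theta>^2 + C * \<theta>^4" and v: "v = A' + B' * \<theta>^2 + C' * \<theta>^4"
    using assms(1,2) by (elim Q_theta2_E) blast
  have "A + A' * \<theta> + B * \<theta>^2 + B' * \<theta>^3 + C * \<theta>^4 + C' * \<theta>^5 = u + \<theta> * v"
    unfolding u v by algebra
  then have "A = 0 \<and> A' = 0 \<and> B = 0 \<and> B' = 0 \<and> C = 0 \<and> C' = 0"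
    using Q_theta6_power_basis_independent[of A A' B B' C C'] assms(3) F by simp
  then show "u = 0" "v = 0" using u v by auto
qed

lemma cube_eq_theta6_cube_imp_zero:
  assumes "B \<in> Q_theta6" "C \<in> Q_theta6" "B^3 = C^3 * \<theta>^6"
  shows "C = 0"
proof -
  have "(B - C * \<theta>^2) * (B^2 + (B * C) * \<theta>^2 + C^2 * \<theta>^4) = B^3 - C^3 * \<theta>^6" by algebra
  then consider "B + (- C) * \<theta>^2 + 0 * \<theta>^4 = 0" | "B^2 + (B * C) * \<theta>^2 + C^2 * \<theta>^4 = 0"
    using assms(3) by auto
  then show ?thesis
  proof cases
    case 1
    then show ?thesis using Q_theta2_coords_eq_0(2)[OF _ _ _ 1] assms by simp
  next
    case 2
    then have "C^2 = 0" using Q_theta2_coords_eq_0(3)[OF _ _ _ 2] assms by simp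
    then show ?thesis by simp
  qed
qed

lemma rat_sqrt_even_or_odd:
  assumes "t \<in> Q_adj \<theta>" "t^2 = of_rat r"
  shows "t \<in> Q_theta2 \<or> (\<exists>v \<in> Q_theta2. t = \<theta> * v)"
proof -
  obtain c where t: "t = (\<Sum>j<12. of_rat (c j) * \<theta>^j)"
    using Q_adj_power_basis[OF assms(1)] by blast
  define X where "X j = of_rat (c j) + of_rat (c (j + 6)) * \<theta>^6" for j
  have X: "X j \<in> Q_theta6" for j unfolding X_def by blast
  define u where "u = X 0 + X 2 * \<theta>^2 + X 4 * \<theta>^4"
  define v where "v = X 1 + X 3 * \<theta>^2 + X 5 * \<theta>^4"
  have u: "u \<in> Q_theta2" and v: "v \<in> Q_theta2"
    unfolding u_def v_def using X by blast+
  have t_eq: "t = u + \<theta> * v"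
    unfolding t u_def v_def X_def by (simp add: eval_nat_numeral algebra_simps)
  have "(u^2 + \<theta>^2 * v^2 - of_rat r) + \<theta> * (2 * u * v) = 0"
    using assms(2) unfolding t_eq by (simp add: power2_eq_square algebra_simps)
  moreover have "u^2 + \<theta>^2 * v^2 - of_rat r \<in> Q_theta2" "2 * u * v \<in> Q_theta2"
    unfolding power2_eq_square
    by (intro Q_theta2_diff Q_theta2_add Q_theta2_mult theta2_in_Q_theta2[unfolded power2_eq_square]
        Q_theta6_subset_Q_theta2 u v; simp)+
  ultimately have "2 * u * v = 0" by (rule Q_theta2_theta_independent(2)[rotated 2])
  then show ?thesis using t_eq u v by auto
qed

lemma rat_sqrt_in_Q_theta2_imp_Q_theta6:
  assumes "u \<in> Q_theta2" "u^2 = of_rat r"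
  shows "u \<in> Q_theta6"
proof -
  obtain A B C where F: "A \<in> Q_theta6" "B \<in> Q_theta6" "C \<in> Q_theta6"
    and u: "u = A + B * \<theta>^2 + C * \<theta>^4"
    using assms(1) by (rule Q_theta2_E)
  have "(A^2 + 2 * B * C * \<theta>^6 - of_rat r) + (2 * A * B + C^2 * \<theta>^6) * \<theta>^2
      + (B^2 + 2 * A * C) * \<theta>^4 = u^2 - of_rat r"
    unfolding u by algebra
  then have "(A^2 + 2 * B * C * \<theta>^6 - of_rat r) + (2 * A * B + C^2 * \<theta>^6) * \<theta>^2
      + (B^2 + 2 * A * C) * \<theta>^4 = 0"
    using assms(2) by simp
  from Q_theta2_coords_eq_0(2,3)[OF _ _ _ this]
  have "2 * A * B + C^2 * \<theta>^6 = 0" "B^2 + 2 * A * C = 0"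
    using F by (simp_all add: power2_eq_square)
  then have "B^3 = C^3 * \<theta>^6" by algebra
  then have "C = 0" using cube_eq_theta6_cube_imp_zero F by blast
  then have "B = 0" using \<open>B^2 + 2 * A * C = 0\<close> by simp
  then show ?thesis using u \<open>C = 0\<close> F by simp
qed

lemma rat_sqrt_in_theta_Q_theta2:
  assumes "v \<in> Q_theta2" "(\<theta> * v)^2 = of_rat r"
  obtains B where "B \<in> Q_theta6" "B^2 * \<theta>^6 = of_rat r"
proof -
  obtain A B C where F: "A \<in> Q_theta6" "B \<in> Q_theta6" "C \<in> Q_theta6"
    and v: "v = A + B * \<theta>^2 + C * \<theta>^4"
    using assms(1) by (rule Q_theta2_E)
  have "((B^2 + 2 * A * C) * \<theta>^6 - of_rat r) + (A^2 + 2 * B * C * \<theta>^6) * \<theta>^2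
      + (2 * A * B + C^2 * \<theta>^6) * \<theta>^4 = (\<theta> * v)^2 - of_rat r"
    unfolding v by algebra
  then have "((B^2 + 2 * A * C) * \<theta>^6 - of_rat r) + (A^2 + 2 * B * C * \<theta>^6) * \<theta>^2
      + (2 * A * B + C^2 * \<theta>^6) * \<theta>^4 = 0"
    using assms(2) by simp
  from Q_theta2_coords_eq_0(2,3)[OF _ _ _ this]
  have h2: "A^2 + 2 * B * C * \<theta>^6 = 0" and h3: "2 * A * B + C^2 * \<theta>^6 = 0"
    using F by (simp_all add: power2_eq_square)
  have "\<theta>^6 * (C * (C^3 * \<theta>^6 + 8 * B^3)) = 0"
    using h2 h3 by algebra \<comment> \<open>eliminate A via (2 A B)^2 = 4 A^2 B^2\<close>
  then have "C * (C^3 * \<theta>^6 + 8 * B^3) = 0" using theta_nonzero by simp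
  have "C = 0"
  proof (rule ccontr)
    assume "C \<noteq> 0"
    then have "C^3 * \<theta>^6 + 8 * B^3 = 0" using \<open>C * (C^3 * \<theta>^6 + 8 * B^3) = 0\<close> by simp
    then have "(- 2 * B)^3 = C^3 * \<theta>^6" by algebra
    then show False using cube_eq_theta6_cube_imp_zero[of "- 2 * B" C] F \<open>C \<noteq> 0\<close> by simp
  qed
  then have "A = 0" using h2 by simp
  have "(\<theta> * v)^2 = B^2 * \<theta>^6"
    unfolding v \<open>A = 0\<close> \<open>C = 0\<close> by algebra
  then show ?thesis using that F assms(2) by simp
qed

lemma nonsquare_rat_square_in_Q_theta6:
  assumes "A \<in> Q_theta6" "A^2 = of_rat r" "\<nexists>q. r = q^2"
  shows "\<exists>q. r * (a^2 - 4 * b) = q^2"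
proof -
  obtain l m where A: "A = of_rat l + of_rat m * \<theta>^6" using assms(1) by (rule Q_theta6_E)
  have "A^2 = of_rat l ^ 2 + 2 * of_rat l * of_rat m * \<theta>^6 + of_rat m ^ 2 * (\<theta>^6 * \<theta>^6)"
    unfolding A by (simp add: power2_eq_square algebra_simps)
  also have "\<dots> = of_rat (l^2 - b * m^2) + of_rat (2 * l * m - a * m^2) * \<theta>^6"
    unfolding theta6_squared by (simp add: algebra_simps of_rat_diff of_rat_mult of_rat_power)
  finally have "of_rat (l^2 - b * m^2 - r) + of_rat (2 * l * m - a * m^2) * \<theta>^6 = 0"
    using assms(2) by (simp add: of_rat_diff)
  from Q_theta6_coords_eq_0[OF this] have l: "l^2 - b * m^2 = r" and m: "2 * l * m = a * m^2"
    by auto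
  have "m \<noteq> 0" using l assms(3) by auto
  then have "2 * l = a * m" using m by (simp add: power2_eq_square)
  then have m2: "m^2 * (a^2 - 4 * b) = 4 * r" using l by algebra
  have "(m * (a^2 - 4 * b) / 2)^2 = m^2 * (a^2 - 4 * b) * (a^2 - 4 * b) / 4"
    by (simp add: power2_eq_square)
  also have "\<dots> = r * (a^2 - 4 * b)" unfolding m2 by simp
  finally show ?thesis by metis
qed

lemma rat_eq_theta6_times_square:
  assumes "B \<in> Q_theta6" "B^2 * \<theta>^6 = of_rat r" "r \<noteq> 0"
  shows "\<exists>s q. s^2 = b \<and> r * (- a + 2 * s) = q^2"
proof -
  obtain l m where B: "B = of_rat l + of_rat m * \<theta>^6" using assms(1) by (rule Q_theta6_E)
  have "B^2 * \<theta>^6 = of_rat (- 2 * b * l * m + a * b * m^2)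
      + of_rat (l^2 - 2 * a * l * m + (a^2 - b) * m^2) * \<theta>^6"
  proof -
    define y where "y = \<theta>^6"
    have "y * y = - of_rat a * y - of_rat b" unfolding y_def by (rule theta6_squared)
    then have "B^2 * y = (- 2 * of_rat b * of_rat l * of_rat m + of_rat a * of_rat b * of_rat m^2)
        + (of_rat l^2 - 2 * of_rat a * of_rat l * of_rat m + (of_rat a^2 - of_rat b) * of_rat m^2) * y"
      unfolding B y_def[symmetric] by algebra
    then show ?thesis
      unfolding y_def by (simp add: of_rat_diff of_rat_mult of_rat_power of_rat_add of_rat_minus)
  qed
  then have "of_rat (- 2 * b * l * m + a * b * m^2 - r)
      + of_rat (l^2 - 2 * a * l * m + (a^2 - b) * m^2) * \<theta>^6 = 0"
    using assms(2) by (simp add: of_rat_diff)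
  from Q_theta6_coords_eq_0[OF this]
  have e1: "- 2 * b * l * m + a * b * m^2 = r" and e2: "l^2 - 2 * a * l * m + (a^2 - b) * m^2 = 0"
    by auto
  have "m \<noteq> 0" using e1 assms(3) by auto
  define \<sigma> where "\<sigma> = (l - a * m) / m"
  have l: "l = (a + \<sigma>) * m" unfolding \<sigma>_def using \<open>m \<noteq> 0\<close> by (simp add: field_simps)
  have "(\<sigma>^2 - b) * m^2 = 0" using e2 unfolding l by (simp add: power2_eq_square algebra_simps)
  then have \<sigma>: "\<sigma>^2 = b" using \<open>m \<noteq> 0\<close> by simp
  have "r * (- a + 2 * (- \<sigma>)) = (\<sigma> * m * (- a - 2 * \<sigma>))^2"
    using e1 unfolding l \<sigma>[symmetric] by (simp add: power2_eq_square algebra_simps flip: e1)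
  then show ?thesis using \<sigma> by (metis power2_minus)
qed

lemma discriminant_eq_square: "(2 * \<theta>^6 + of_rat a)^2 = of_rat (a^2 - 4 * b)"
proof -
  have "(2 * \<theta>^6 + of_rat a)^2 = 4 * (\<theta>^6 * \<theta>^6) + 4 * of_rat a * \<theta>^6 + of_rat a ^ 2"
    by (simp add: power2_eq_square algebra_simps)
  also have "\<dots> = of_rat (a^2 - 4 * b)"
    unfolding theta6_squared by (simp add: algebra_simps of_rat_diff of_rat_mult of_rat_power)
  finally show ?thesis .
qed

lemma discriminant_nonzero: "a^2 - 4 * b \<noteq> 0"
proof -
  have "2 * \<theta>^6 + of_rat a \<noteq> 0"
    using Q_theta6_coords_eq_0(2)[of a 2] by (auto simp: algebra_simps)
  then show ?thesis using discriminant_eq_square by (metis of_rat_0 power_eq_0_iff)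
qed

lemma square_in_Q_adj_if_discriminant:
  assumes "r * (a^2 - 4 * b) = q^2"
  shows "of_rat r \<in> squares_in (Q_adj \<theta>)"
proof -
  have "2 * \<theta>^6 + of_rat a \<in> Q_adj \<theta>"
    by (intro subfield_C_add subfield_C_mult subfield_C_power of_rat_in_subfield_C
        subfield_C_Q_adj self_in_Q_adj of_rat_in_subfield_C[of _ 2, simplified])
  from of_rat_in_squares_in_if_mult_square[OF subfield_C_Q_adj this discriminant_eq_square
      discriminant_nonzero assms]
  show ?thesis .
qed

lemma square_in_Q_adj_if_b_square:
  assumes "s^2 = b" "r * (- a + 2 * s) = q^2"
  shows "of_rat r \<in> squares_in (Q_adj \<theta>)"
proof -
  define u where "u = \<theta>^3 + of_rat s / \<theta>^3"
  have "u \<in> Q_adj \<theta>" unfolding u_def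
    by (intro subfield_C_divide subfield_C_add subfield_C_power of_rat_in_subfield_C
        subfield_C_Q_adj self_in_Q_adj)
  have "\<theta>^3 \<noteq> 0" using theta_nonzero by simp
  have "u^2 = \<theta>^6 + 2 * of_rat s + of_rat (s^2) / \<theta>^6"
    unfolding u_def using \<open>\<theta>^3 \<noteq> 0\<close>
    by (simp add: power2_eq_square field_simps of_rat_mult flip: power_add)
  also have "of_rat (s^2) / \<theta>^6 = (- of_rat a * \<theta>^6 - \<theta>^6 * \<theta>^6) / \<theta>^6"
    using theta6_squared assms(1) by (simp add: algebra_simps)
  also have "\<dots> = - of_rat a - \<theta>^6"
    using \<open>\<theta>^3 \<noteq> 0\<close> by (simp add: field_simps power2_eq_square)
  finally have "u^2 = of_rat (- a + 2 * s)"
    by (simp add: of_rat_diff of_rat_mult)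
  moreover have "- a + 2 * s \<noteq> 0"
    using discriminant_nonzero assms(1) by (auto simp: power2_eq_square)
  ultimately show ?thesis
    using of_rat_in_squares_in_if_mult_square[OF subfield_C_Q_adj \<open>u \<in> Q_adj \<theta>\<close>] assms(2) by blast
qed

lemma square_in_Q_adj_iff:
  assumes "\<nexists>q. r = q^2"
  shows "of_rat r \<in> squares_in (Q_adj \<theta>) \<longleftrightarrow>
           (\<exists>q. r * (a^2 - 4 * b) = q^2) \<or> (\<exists>s q. s^2 = b \<and> r * (- a + 2 * s) = q^2)"
proof
  assume "of_rat r \<in> squares_in (Q_adj \<theta>)"
  then obtain t where t: "t \<in> Q_adj \<theta>" "t^2 = of_rat r" unfolding squares_in_def by auto
  have "r \<noteq> 0" using assms by auto
  from rat_sqrt_even_or_odd[OF t] show "(\<exists>q. r * (a^2 - 4 * b) = q^2) \<or>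
      (\<exists>s q. s^2 = b \<and> r * (- a + 2 * s) = q^2)"
  proof
    assume "t \<in> Q_theta2"
    then have "t \<in> Q_theta6" using rat_sqrt_in_Q_theta2_imp_Q_theta6 t(2) by blast
    then show ?thesis using nonsquare_rat_square_in_Q_theta6 t(2) assms by blast
  next
    assume "\<exists>v \<in> Q_theta2. t = \<theta> * v"
    then obtain B where "B \<in> Q_theta6" "B^2 * \<theta>^6 = of_rat r"
      using rat_sqrt_in_theta_Q_theta2 t(2) by blast
    then show ?thesis using rat_eq_theta6_times_square \<open>r \<noteq> 0\<close> by blast
  qed
next
  assume "(\<exists>q. r * (a^2 - 4 * b) = q^2) \<or> (\<exists>s q. s^2 = b \<and> r * (- a + 2 * s) = q^2)"
  then show "of_rat r \<in> squares_in (Q_adj \<theta>)"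
    using square_in_Q_adj_if_discriminant square_in_Q_adj_if_b_square by blast
qed

end

theorem proposition3p3:
  fixes a b r :: rat and \<theta> :: complex
  assumes irr: "irreducible (monom 1 12 + monom a 6 + [:b:] :: rat poly)"
    and root: "poly (map_poly of_rat (monom 1 12 + monom a 6 + [:b:])) \<theta> = 0"
    and nonsq: "of_rat r \<notin> rat_squares"
  shows "of_rat r \<in> squares_in (Q_adj \<theta>) \<longleftrightarrow>
           (of_rat r * of_rat (a ^ 2 - 4 * b) \<in> rat_squares \<or>
            of_rat r * (- of_rat a + 2 * csqrt (of_rat b)) \<in> rat_squares \<or>
            of_rat r * (- of_rat a - 2 * csqrt (of_rat b)) \<in> rat_squares)"
proof -
  interpret root_of_trinomial a b \<theta> using irr root by unfold_locales
  have r_nonsquare: "\<nexists>q. r = q^2" using nonsq by (simp add: of_rat_in_rat_squares_iff)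
  then have "r \<noteq> 0" by (metis power_zero_numeral)
  show ?thesis
    unfolding square_in_Q_adj_iff[OF r_nonsquare] rat_squares_csqrt_iff[OF \<open>r \<noteq> 0\<close>]
      of_rat_mult[symmetric] of_rat_in_rat_squares_iff ..
qed

end
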